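(* Let $H$ be an abelian group with an alternating $\mathbb{Z}$-bilinear form $\langle-,-\rangle\neq0$, and let $z\in\ker\mu$. Let $\omega\in C^3(\mathbb{Q}[H])_{(z)}$ be the cochain with $\omega([u],[v],[w])=\langle u,v\rangle$ if $u+v+w=z$ and $\omega([u],[v],[w])=0$ otherwise (for $u,v,w\in H$); $\omega$ is a 3-cocycle, and so is its restriction to $\mathbb{Q}[H^{(1)}]$. If $z$ is a torsion element (i.e. $nz=0$ for some $n\in\mathbb{Z}\setminus\{0\}$), then $[\omega]\neq0$ in $H^3(\mathbb{Q}[H])_{(z)}$. If $z$ is not a torsion element, then the class of the restriction of $\omega$ is $0$ in $H^3(\mathbb{Q}[H^{(1)}])_{(z)}$.
   Context: $\mu:H\to\mathrm{Hom}_{\mathbb{Z}}(H,\mathbb{Z})$, $\mu(x)(y)=\langle x,y\rangle$; $H^{(1)}:=H\setminus\ker\mu$. $\mathbb{Q}[S]$ ($S\subset H$) is the $\mathbb{Q}$-vector space with basis symbols $[x]$, $x\in S$; $\mathbb{Q}[H]$ is a Lie algebra via $[[x],[y]]=\langle x,y\rangle[x+y]$ and $\mathbb{Q}[H^{(1)}]$ is a Lie subalgebra. For a Lie algebra $\mathfrak g$, $C^p(\mathfrak g)=\mathrm{Hom}_{\mathbb{Q}}(\bigwedge^p\mathfrak g,\mathbb{Q})$ is the Chevalley–Eilenberg cochain complex with trivial coefficients, with $d\eta(x_1,\dots,x_{p+1})=\sum_{i<j}(-1)^{i+j}\eta([x_i,x_j],x_1,\dots,\widehat{x_i},\dots,\widehat{x_j},\dots,x_{p+1})$.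 For $S\in\{H,H^{(1)}\}$, $p>0$, $C^p(\mathbb{Q}[S])_{(z)}$ is the subcomplex of cochains vanishing on $([u_1],\dots,[u_p])$, $u_i\in S$, whenever $u_1+\cdots+u_p\neq z$, and $H^p(\mathbb{Q}[S])_{(z)}$ is its cohomology. *)

theory Defs
  imports Complex_Main
begin

definition bilinear_form :: "('a::ab_group_add \<Rightarrow> 'a \<Rightarrow> int) \<Rightarrow> bool" where
  "bilinear_form B \<longleftrightarrow> (\<forall>x y w. B (x + y) w = B x w + B y w) \<and> (\<forall>x y w. B x (y + w) = B x y + B x w)"

definition alternating_form :: "('a::ab_group_add \<Rightarrow> 'a \<Rightarrow> int) \<Rightarrow> bool" where
  "alternating_form B \<longleftrightarrow> (\<forall>x. B x x = 0)"

definition ker_mu :: "('a::ab_group_add \<Rightarrow> 'a \<Rightarrow> int) \<Rightarrow> 'a set" where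
  "ker_mu B = {x. \<forall>y. B x y = 0}"

definition H1 :: "('a::ab_group_add \<Rightarrow> 'a \<Rightarrow> int) \<Rightarrow> 'a set" where
  "H1 B = UNIV - ker_mu B"

text \<open>Torsion: n z = 0 for some nonzero integer n (equivalently some positive n).\<close>
definition torsion_elem :: "'a::ab_group_add \<Rightarrow> bool" where
  "torsion_elem z \<longleftrightarrow> (\<exists>n::nat. n > 0 \<and> (\<Sum>i<n. z) = 0)"

text \<open>A p-cochain on Q[S] is a linear map from the p-th exterior power of Q[S] to Q;
  it is determined by its (arbitrary, alternating) values on basis tuples ([u_1],...,[u_p]), u_i in S.
  We represent it by a function on lists; only values on lists of length p with entries in S matter.\<close>

definition list_swap :: "'b list \<Rightarrow> nat \<Rightarrow> nat \<Rightarrow> 'b list" where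
  "list_swap us i j = us[i := us ! j, j := us ! i]"

definition cochain_on :: "'a set \<Rightarrow> nat \<Rightarrow> ('a list \<Rightarrow> rat) \<Rightarrow> bool" where
  "cochain_on S p \<eta> \<longleftrightarrow>
     (\<forall>us. length us = p \<and> set us \<subseteq> S \<longrightarrow>
        (\<forall>i j. i < j \<and> j < p \<longrightarrow> \<eta> (list_swap us i j) = - \<eta> us))"

definition graded_cochain :: "'a::ab_group_add set \<Rightarrow> nat \<Rightarrow> 'a \<Rightarrow> ('a list \<Rightarrow> rat) \<Rightarrow> bool" where
  "graded_cochain S p z \<eta> \<longleftrightarrow> cochain_on S p \<eta> \<and>
     (\<forall>us. length us = p \<and> set us \<subseteq> S \<and> sum_list us \<noteq> z \<longrightarrow> \<eta> us = 0)"

definition del2 :: "'b list \<Rightarrow> nat \<Rightarrow> nat \<Rightarrow> 'b list" where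
  "del2 us i j = map (nth us) (filter (\<lambda>k. k \<noteq> i \<and> k \<noteq> j) [0..<length us])"

text \<open>Chevalley-Eilenberg differential evaluated on basis elements, using
  [[x],[y]] = <x,y>[x+y] (indices 0-based; the sign (-1)^(i+j) is unchanged).\<close>
definition CE_d :: "('a::ab_group_add \<Rightarrow> 'a \<Rightarrow> int) \<Rightarrow> ('a list \<Rightarrow> rat) \<Rightarrow> 'a list \<Rightarrow> rat" where
  "CE_d B \<eta> us = (\<Sum>i<length us. \<Sum>j\<in>{i<..<length us}.
      (-1) ^ (i + j) * of_int (B (us ! i) (us ! j)) * \<eta> ((us ! i + us ! j) # del2 us i j))"

definition is_cocycle :: "('a::ab_group_add \<Rightarrow> 'a \<Rightarrow> int) \<Rightarrow> 'a set \<Rightarrow> nat \<Rightarrow> ('a list \<Rightarrow> rat) \<Rightarrow> bool" where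
  "is_cocycle B S p \<omega> \<longleftrightarrow> (\<forall>us. length us = Suc p \<and> set us \<subseteq> S \<longrightarrow> CE_d B \<omega> us = 0)"

text \<open>The class of the p-cochain omega vanishes in H^p(Q[S])_(z) (p > 0):
  omega = d eta for some eta in C^(p-1)(Q[S])_(z).\<close>
definition is_coboundary :: "('a::ab_group_add \<Rightarrow> 'a \<Rightarrow> int) \<Rightarrow> 'a set \<Rightarrow> nat \<Rightarrow> 'a \<Rightarrow> ('a list \<Rightarrow> rat) \<Rightarrow> bool" where
  "is_coboundary B S p z \<omega> \<longleftrightarrow> (\<exists>\<eta>. graded_cochain S (p - 1) z \<eta> \<and>
      (\<forall>us. length us = p \<and> set us \<subseteq> S \<longrightarrow> CE_d B \<eta> us = \<omega> us))"

definition omega :: "('a::ab_group_add \<Rightarrow> 'a \<Rightarrow> int) \<Rightarrow> 'a \<Rightarrow> 'a list \<Rightarrow> rat" where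
  "omega B z us = (if sum_list us = z then of_int (B (us ! 0) (us ! 1)) else 0)"

end

theory Submission
  imports Defs
begin

text \<open>For a 2-cochain \<open>\<eta>\<close> of degree \<open>z\<close> put \<open>f x = \<eta>([x], [z - x])\<close>. Alternation gives
  \<open>f (z - x) = - f x\<close>, and \<open>d\<eta> = \<omega>\<close> on a triple \<open>u, v, z - u - v\<close> with \<open>\<langle>u, v\<rangle> \<noteq> 0\<close> says
  \<open>f (u + v) = f u + f v - 1\<close>; together, \<open>f (x + z) = f x - 2\<close> for every \<open>x \<notin> ker \<mu>\<close>.
  If \<open>n z = 0\<close> with \<open>n > 0\<close> this gives \<open>f x = f x - 2 n\<close>, so \<open>\<omega>\<close> is not a coboundary
  (even over \<open>\<rat>[H\<^sup>(\<^sup>1\<^sup>)]\<close>, since only elements of \<open>H\<^sup>(\<^sup>1\<^sup>)\<close> occur).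
  Conversely \<open>f = 1 - 2 \<phi>\<close> solves both equations for every additive \<open>\<phi> : H \<rightarrow> \<rat>\<close> with
  \<open>\<phi> z = 1\<close>, and such a \<open>\<phi>\<close> exists if \<open>z\<close> has infinite order: \<open>\<rat>\<close> is divisible, so
  \<open>n z \<mapsto> n\<close> extends from \<open>\<langle>z\<rangle>\<close> to \<open>H\<close> by Zorn's lemma.\<close>

definition int_mult :: "int \<Rightarrow> 'a::ab_group_add \<Rightarrow> 'a" where
  "int_mult n x = (\<Sum>i<nat n. x) - (\<Sum>i<nat (- n). x)"

lemma sum_const_lessThan_add:
  fixes x :: "'a::comm_monoid_add" and m n :: nat
  shows "(\<Sum>i<m + n. x) = (\<Sum>i<m. x) + (\<Sum>i<n. x)"
  by (induction n) (simp_all add: add.assoc)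

lemma sum_const_lessThan_mult:
  fixes x :: "'a::comm_monoid_add" and m n :: nat
  shows "(\<Sum>i<m * n. x) = (\<Sum>i<m. \<Sum>j<n. x)"
  by (induction m) (simp_all add: sum_const_lessThan_add add.commute)

lemma int_mult_0 [simp]: "int_mult 0 x = 0"
  and int_mult_1 [simp]: "int_mult 1 x = x"
  by (simp_all add: int_mult_def)

lemma int_mult_minus: "int_mult (- n) x = - int_mult n x"
  by (simp add: int_mult_def)

lemma int_mult_diff_of_nat: "int_mult (int a - int b) x = (\<Sum>i<a. x) - (\<Sum>i<b. x)"
proof (cases "b \<le> a")
  case True
  then obtain c where "a = b + c" using le_Suc_ex by blast
  then show ?thesis by (simp add: int_mult_def sum_const_lessThan_add)
next
  case False
  then obtain c where "b = a + c" by (metis le_Suc_ex nat_le_linear)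
  then show ?thesis by (simp add: int_mult_def sum_const_lessThan_add)
qed

lemma int_eq_diff_of_nat: obtains a b where "n = int a - int b"
proof
  show "n = int (nat n) - int (nat (- n))" by simp
qed

lemma int_mult_add: "int_mult (m + n) x = int_mult m x + int_mult n x"
proof -
  obtain a b c d where mn: "m = int a - int b" "n = int c - int d"
    by (metis int_eq_diff_of_nat)
  have "m + n = int (a + c) - int (b + d)"
    unfolding mn by simp
  then show ?thesis
    by (simp only: mn int_mult_diff_of_nat sum_const_lessThan_add) (simp add: algebra_simps)
qed

lemma int_mult_mult: "int_mult (m * n) x = int_mult m (int_mult n x)"
proof -
  obtain a b c d where mn: "m = int a - int b" "n = int c - int d"
    by (metis int_eq_diff_of_nat)
  have "m * n = int (a * c + b * d) - int (a * d + b * c)"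
    unfolding mn by (simp add: algebra_simps)
  then show ?thesis
    by (simp only: mn int_mult_diff_of_nat sum_const_lessThan_add sum_const_lessThan_mult
        sum_subtractf) (simp add: algebra_simps)
qed

text \<open>An additive subgroup of \<open>H \<times> \<rat>\<close> meeting \<open>{0} \<times> \<rat>\<close> only in \<open>(0, 0)\<close>: the graph
  of a homomorphism from a subgroup of \<open>H\<close> to \<open>\<rat>\<close>.\<close>
definition partial_hom_graph :: "('a::ab_group_add \<times> rat) set \<Rightarrow> bool" where
  "partial_hom_graph G \<longleftrightarrow> (0, 0) \<in> G
     \<and> (\<forall>a p b q. (a, p) \<in> G \<longrightarrow> (b, q) \<in> G \<longrightarrow> (a + b, p + q) \<in> G)
     \<and> (\<forall>a p. (a, p) \<in> G \<longrightarrow> (- a, - p) \<in> G)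
     \<and> (\<forall>q. (0, q) \<in> G \<longrightarrow> q = 0)"

lemma partial_hom_graphI:
  assumes "(0, 0) \<in> G"
    and "\<And>a p b q. (a, p) \<in> G \<Longrightarrow> (b, q) \<in> G \<Longrightarrow> (a + b, p + q) \<in> G"
    and "\<And>a p. (a, p) \<in> G \<Longrightarrow> (- a, - p) \<in> G"
    and "\<And>q. (0, q) \<in> G \<Longrightarrow> q = 0"
  shows "partial_hom_graph G"
  using assms unfolding partial_hom_graph_def by blast

context
  fixes G :: "('a::ab_group_add \<times> rat) set"
  assumes G: "partial_hom_graph G"
begin

lemma partial_hom_graph_zero: "(0, 0) \<in> G"
  and partial_hom_graph_add: "(a, p) \<in> G \<Longrightarrow> (b, q) \<in> G \<Longrightarrow> (a + b, p + q) \<in> G"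
  and partial_hom_graph_uminus: "(a, p) \<in> G \<Longrightarrow> (- a, - p) \<in> G"
  and partial_hom_graph_zero_unique: "(0, q) \<in> G \<Longrightarrow> q = 0"
  using G unfolding partial_hom_graph_def by blast+

lemma partial_hom_graph_unique:
  assumes "(a, p) \<in> G" "(a, q) \<in> G"
  shows "p = q"
proof -
  have "(a + - a, p + - q) \<in> G"
    using assms by (intro partial_hom_graph_add partial_hom_graph_uminus)
  then show ?thesis
    using partial_hom_graph_zero_unique by fastforce
qed

lemma partial_hom_graph_int_mult:
  assumes "(a, p) \<in> G"
  shows "(int_mult n a, of_int n * p) \<in> G"
proof -
  have nat_mult: "((\<Sum>i<k. a), of_nat k * p) \<in> G" for k
    by (induction k) (simp_all add: partial_hom_graph_zero partial_hom_graph_add assms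
        algebra_simps)
  show ?thesis
  proof (cases "n \<ge> 0")
    case True
    then show ?thesis using nat_mult[of "nat n"] by (simp add: int_mult_def)
  next
    case False
    then show ?thesis
      using partial_hom_graph_uminus[OF nat_mult[of "nat (- n)"]] by (simp add: int_mult_def)
  qed
qed

text \<open>The one place where divisibility of \<open>\<rat>\<close> is used: \<open>r = q\<^sub>0 / m\<^sub>0\<close> for any
  \<open>(m\<^sub>0 x, q\<^sub>0) \<in> G\<close> with \<open>m\<^sub>0 \<noteq> 0\<close>.\<close>
lemma partial_hom_graph_multiples:
  obtains r where "\<And>m q. (int_mult m x, q) \<in> G \<Longrightarrow> q = of_int m * r"
proof (cases "\<exists>m q. m \<noteq> 0 \<and> (int_mult m x, q) \<in> G")
  case True
  then obtain m0 q0 where m0: "m0 \<noteq> 0" "(int_mult m0 x, q0) \<in> G"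
    by blast
  show ?thesis
  proof
    fix m q
    assume "(int_mult m x, q) \<in> G"
    have "(int_mult (m0 * m) x, of_int m0 * q) \<in> G"
      using partial_hom_graph_int_mult[OF \<open>(int_mult m x, q) \<in> G\<close>] by (simp add: int_mult_mult)
    moreover have "(int_mult (m0 * m) x, of_int m * q0) \<in> G"
      using partial_hom_graph_int_mult[OF m0(2), of m]
      by (simp add: int_mult_mult[symmetric] mult.commute)
    ultimately have "of_int m0 * q = of_int m * q0"
      by (rule partial_hom_graph_unique)
    then show "q = of_int m * (q0 / of_int m0)"
      using m0(1) by (simp add: field_simps)
  qed
next
  case False
  show ?thesis
  proof
    fix m q
    assume "(int_mult m x, q) \<in> G"
    with False have "(0, q) \<in> G"
      by (metis int_mult_0)
    then show "q = of_int m * 0"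
      using partial_hom_graph_zero_unique by simp
  qed
qed

lemma partial_hom_graph_extend:
  obtains G' r where "partial_hom_graph G'" "G \<subseteq> G'" "(x, r) \<in> G'"
proof -
  obtain r where r: "\<And>m q. (int_mult m x, q) \<in> G \<Longrightarrow> q = of_int m * r"
    using partial_hom_graph_multiples by blast
  define G' where "G' = {(a + int_mult m x, p + of_int m * r) | a p m. (a, p) \<in> G}"
  have "partial_hom_graph G'"
  proof (rule partial_hom_graphI)
    show "(0, 0) \<in> G'"
      unfolding G'_def using partial_hom_graph_zero by force
  next
    fix a p b q
    assume "(a, p) \<in> G'" "(b, q) \<in> G'"
    then obtain a' p' m b' q' n where "(a', p') \<in> G" "(b', q') \<in> G"
      and "a = a' + int_mult m x" "p = p' + of_int m * r"
      and "b = b' + int_mult n x" "q = q' + of_int n * r"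
      unfolding G'_def by blast
    then show "(a + b, p + q) \<in> G'"
      unfolding G'_def using partial_hom_graph_add
      by (intro CollectI exI[of _ "a' + b'"] exI[of _ "p' + q'"] exI[of _ "m + n"])
        (simp add: int_mult_add algebra_simps)
  next
    fix a p
    assume "(a, p) \<in> G'"
    then obtain a' p' m where "(a', p') \<in> G" "a = a' + int_mult m x" "p = p' + of_int m * r"
      unfolding G'_def by blast
    then show "(- a, - p) \<in> G'"
      unfolding G'_def using partial_hom_graph_uminus
      by (intro CollectI exI[of _ "- a'"] exI[of _ "- p'"] exI[of _ "- m"])
        (simp add: int_mult_minus)
  next
    fix q
    assume "(0, q) \<in> G'"
    then obtain a p m where "(a, p) \<in> G" "0 = a + int_mult m x" "q = p + of_int m * r"
      unfolding G'_def by blast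
    moreover from this have "(int_mult m x, - p) \<in> G"
      using partial_hom_graph_uminus by (metis add_eq_0_iff)
    ultimately show "q = 0"
      using r by fastforce
  qed
  moreover have "G \<subseteq> G'"
    unfolding G'_def by (force intro: exI[of _ 0])
  moreover have "(x, r) \<in> G'"
    unfolding G'_def using partial_hom_graph_zero
    by (intro CollectI exI[of _ 0] exI[of _ 0] exI[of _ 1]) simp
  ultimately show ?thesis
    using that by blast
qed

end

lemma partial_hom_graph_Union:
  assumes "C \<noteq> {}" "chain\<^sub>\<subseteq> C" "\<And>G. G \<in> C \<Longrightarrow> partial_hom_graph G"
  shows "partial_hom_graph (\<Union>C)"
proof (rule partial_hom_graphI)
  show "(0, 0) \<in> \<Union>C"
    using assms(1,3) partial_hom_graph_zero by blast
next
  fix a p b q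
  assume "(a, p) \<in> \<Union>C" "(b, q) \<in> \<Union>C"
  then obtain G1 G2 where "G1 \<in> C" "G2 \<in> C" "(a, p) \<in> G1" "(b, q) \<in> G2"
    by blast
  with assms(2) obtain G where "G \<in> C" "(a, p) \<in> G" "(b, q) \<in> G"
    unfolding chain_subset_def by blast
  then show "(a + b, p + q) \<in> \<Union>C"
    using assms(3) partial_hom_graph_add by blast
next
  show "(a, p) \<in> \<Union>C \<Longrightarrow> (- a, - p) \<in> \<Union>C" for a p
    using assms(3) partial_hom_graph_uminus by blast
  show "(0, q) \<in> \<Union>C \<Longrightarrow> q = 0" for q
    using assms(3) partial_hom_graph_zero_unique by blast
qed

lemma not_torsion_elem_int_mult_eq_0:
  assumes "\<not> torsion_elem z" "int_mult n z = 0"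
  shows "n = 0"
proof (rule ccontr)
  assume "n \<noteq> 0"
  then obtain k :: nat where "k > 0" "(\<Sum>i<k. z) = 0"
  proof (cases "n > 0")
    case True
    then show ?thesis using that[of "nat n"] assms(2) by (simp add: int_mult_def)
  next
    case False
    then show ?thesis using that[of "nat (- n)"] \<open>n \<noteq> 0\<close> assms(2) by (simp add: int_mult_def)
  qed
  then show False
    using assms(1) unfolding torsion_elem_def by blast
qed

lemma partial_hom_graph_cyclic:
  assumes "\<not> torsion_elem z"
  shows "partial_hom_graph {(int_mult n z, of_int n) | n. True}"
  by (rule partial_hom_graphI)
    (auto simp: int_mult_add int_mult_minus not_torsion_elem_int_mult_eq_0[OF assms]
      intro: exI[of _ 0] exI[of _ "_ + _"] exI[of _ "- _"])

lemma partial_hom_graph_extend_total: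
  assumes "partial_hom_graph G"
  obtains M where "partial_hom_graph M" "G \<subseteq> M" "\<And>x. \<exists>r. (x, r) \<in> M"
proof -
  define A where "A = {G'. partial_hom_graph G' \<and> G \<subseteq> G'}"
  have "\<forall>C\<in>chains A. \<exists>U\<in>A. \<forall>X\<in>C. X \<subseteq> U"
  proof
    fix C
    assume C: "C \<in> chains A"
    show "\<exists>U\<in>A. \<forall>X\<in>C. X \<subseteq> U"
    proof (cases "C = {}")
      case True
      then show ?thesis
        using assms unfolding A_def by blast
    next
      case False
      with C have "\<Union>C \<in> A"
        unfolding A_def chains_def using partial_hom_graph_Union by blast
      then show ?thesis by blast
    qed
  qed
  from Zorn_Lemma2[OF this] obtain M
    where "M \<in> A" and M_max: "\<And>X. X \<in> A \<Longrightarrow> M \<subseteq> X \<Longrightarrow> X = M"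
    by blast
  then have M: "partial_hom_graph M" "G \<subseteq> M"
    unfolding A_def by auto
  have "\<exists>r. (x, r) \<in> M" for x
  proof -
    obtain G' r where "partial_hom_graph G'" "M \<subseteq> G'" "(x, r) \<in> G'"
      using partial_hom_graph_extend[OF M(1)] .
    with M(2) M_max[of G'] show ?thesis
      unfolding A_def by auto
  qed
  with M show ?thesis
    using that by blast
qed

lemma not_torsion_elem_ex_hom:
  fixes z :: "'a::ab_group_add"
  assumes "\<not> torsion_elem z"
  obtains \<phi> :: "'a \<Rightarrow> rat" where "\<And>x y. \<phi> (x + y) = \<phi> x + \<phi> y" "\<phi> z = 1"
proof -
  obtain M where M: "partial_hom_graph M" "{(int_mult n z, of_int n) | n. True} \<subseteq> M"
    and total: "\<And>x. \<exists>r. (x, r) \<in> M"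
    using partial_hom_graph_extend_total[OF partial_hom_graph_cyclic[OF assms]] by blast
  define \<phi> where "\<phi> x = (SOME r. (x, r) \<in> M)" for x
  have \<phi>: "(x, \<phi> x) \<in> M" for x
    unfolding \<phi>_def using total by (rule someI_ex)
  have "(z, 1) \<in> M"
    using M(2) by (force intro: exI[of _ 1])
  show ?thesis
  proof
    show "\<phi> (x + y) = \<phi> x + \<phi> y" for x y
      using partial_hom_graph_add[OF M(1) \<phi> \<phi>] \<phi> partial_hom_graph_unique[OF M(1)] by blast
    show "\<phi> z = 1"
      using partial_hom_graph_unique[OF M(1) \<phi> \<open>(z, 1) \<in> M\<close>] .
  qed
qed

lemma CE_d_eq_sum_list:
  "CE_d B \<eta> us = (\<Sum>i\<leftarrow>[0..<length us]. \<Sum>j\<leftarrow>[Suc i..<length us].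
      (-1) ^ (i + j) * of_int (B (us ! i) (us ! j)) * \<eta> ((us ! i + us ! j) # del2 us i j))"
  unfolding CE_d_def atLeast_upt greaterThanLessThan_upt
  by (simp only: sum.distinct_set_conv_list distinct_upt)

lemma CE_d_triple:
  "CE_d B \<eta> [a, b, c] = - of_int (B a b) * \<eta> [a + b, c] + of_int (B a c) * \<eta> [a + c, b]
     - of_int (B b c) * \<eta> [b + c, a]"
  by (simp add: CE_d_eq_sum_list del2_def eval_nat_numeral upt_rec)

lemma CE_d_quadruple:
  "CE_d B \<eta> [a, b, c, d] = - of_int (B a b) * \<eta> [a + b, c, d] + of_int (B a c) * \<eta> [a + c, b, d]
     - of_int (B a d) * \<eta> [a + d, b, c] - of_int (B b c) * \<eta> [b + c, a, d]
     + of_int (B b d) * \<eta> [b + d, a, c] - of_int (B c d) * \<eta> [c + d, a, b]"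
  by (simp add: CE_d_eq_sum_list del2_def eval_nat_numeral upt_rec)

lemma length_2_cases: "length us = 2 \<Longrightarrow> \<exists>a b. us = [a, b]"
  and length_3_cases: "length us = 3 \<Longrightarrow> \<exists>a b c. us = [a, b, c]"
  and length_4_cases: "length us = 4 \<Longrightarrow> \<exists>a b c d. us = [a, b, c, d]"
  by (auto simp: numeral_eq_Suc length_Suc_conv)

lemma graded_cochain_subset:
  "graded_cochain S p z \<eta> \<Longrightarrow> T \<subseteq> S \<Longrightarrow> graded_cochain T p z \<eta>"
  unfolding graded_cochain_def cochain_on_def by blast

lemma is_cocycle_subset: "is_cocycle B S p \<eta> \<Longrightarrow> T \<subseteq> S \<Longrightarrow> is_cocycle B T p \<eta>"
  unfolding is_cocycle_def by blast

lemma graded_cochain_2_swap: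
  assumes "graded_cochain S 2 z \<eta>" "a \<in> S" "b \<in> S"
  shows "\<eta> [b, a] = - \<eta> [a, b]"
proof -
  have "\<eta> (list_swap [a, b] 0 1) = - \<eta> [a, b]"
    using assms unfolding graded_cochain_def cochain_on_def by simp
  then show ?thesis
    by (simp add: list_swap_def)
qed

lemma H1_iff: "x \<in> H1 B \<longleftrightarrow> (\<exists>y. B x y \<noteq> 0)"
  unfolding H1_def ker_mu_def by blast

locale alternating_bilinear =
  fixes B :: "'a::ab_group_add \<Rightarrow> 'a \<Rightarrow> int"
  assumes bilinear: "bilinear_form B" and alternating: "alternating_form B"
begin

lemma add_left: "B (x + y) w = B x w + B y w"
  and add_right: "B x (y + w) = B x y + B x w"
  using bilinear unfolding bilinear_form_def by blast+

lemma zero_left [simp]: "B 0 w = 0"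
  using add_left[of 0 0 w] by simp

lemma zero_right [simp]: "B x 0 = 0"
  using add_right[of x 0 0] by simp

lemma minus_left: "B (- x) w = - B x w"
  using add_left[of x "- x" w] by simp

lemma minus_right: "B x (- y) = - B x y"
  using add_right[of x y "- y"] by simp

lemma diff_left: "B (x - y) w = B x w - B y w"
  using add_left[of x "- y" w] by (simp add: minus_left)

lemma diff_right: "B x (y - w) = B x y - B x w"
  using add_right[of x y "- w"] by (simp add: minus_right)

lemma self [simp]: "B x x = 0"
  using alternating unfolding alternating_form_def by blast

lemma skew: "B y x = - B x y"
  using self[of "x + y"] unfolding add_left add_right by simp

lemmas linear_simps = add_left add_right minus_left minus_right diff_left diff_right

lemma sum_left: "B (\<Sum>i<n. x) w = int n * B x w"
  by (induction n) (simp_all add: add_left algebra_simps)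

end

locale alternating_bilinear_ker = alternating_bilinear +
  fixes z :: "'a::ab_group_add"
  assumes z_ker: "z \<in> ker_mu B"
begin

lemma ker_left [simp]: "B z y = 0"
  using z_ker unfolding ker_mu_def by blast

lemma ker_right [simp]: "B y z = 0"
  using skew[of z y] by simp

lemma omega_graded_cochain: "graded_cochain UNIV 3 z (omega B z)"
  unfolding graded_cochain_def cochain_on_def
proof (intro conjI allI impI)
  fix us :: "'a list" and i j :: nat
  assume "length us = 3 \<and> set us \<subseteq> UNIV" and ij: "i < j \<and> j < 3"
  then obtain a b c where us: "us = [a, b, c]"
    using length_3_cases by blast
  from ij have "(i, j) \<in> {(0, 1), (0, 2), (1, 2)}"
    by auto
  then show "omega B z (list_swap us i j) = - omega B z us"
  proof (cases "a + b + c = z")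
    case True
    then have c: "c = z - a - b"
      by (simp add: algebra_simps)
    from \<open>(i, j) \<in> _\<close> show ?thesis
      by (auto simp: us c list_swap_def omega_def linear_simps skew[of a b] algebra_simps)
  qed (auto simp: us list_swap_def omega_def algebra_simps)
qed (simp add: omega_def)

lemma omega_cocycle: "is_cocycle B UNIV 3 (omega B z)"
  unfolding is_cocycle_def
proof (intro allI impI)
  fix us :: "'a list"
  assume "length us = Suc 3 \<and> set us \<subseteq> UNIV"
  then have "length us = 4"
    by simp
  then obtain a b c d where us: "us = [a, b, c, d]"
    using length_4_cases by blast
  show "CE_d B (omega B z) us = 0"
  proof (cases "a + b + c + d = z")
    case True
    then have d: "d = z - a - b - c"
      by (simp add: algebra_simps)
    show ?thesis
      by (simp add: us d CE_d_quadruple omega_def linear_simps skew[of a b] skew[of a c]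
          skew[of b c] algebra_simps)
  qed (simp add: us CE_d_quadruple omega_def algebra_simps)
qed

lemma omega_coboundary_functional_equation:
  assumes \<eta>: "graded_cochain S 2 z \<eta>"
    and d\<eta>: "\<forall>us. length us = 3 \<and> set us \<subseteq> S \<longrightarrow> CE_d B \<eta> us = omega B z us"
    and S: "H1 B \<subseteq> S" and uv: "B u v \<noteq> 0"
  shows "\<eta> [u + v, z - (u + v)] = \<eta> [u, z - u] + \<eta> [v, z - v] - 1"
proof -
  define w where "w = z - u - v"
  have "B u v \<noteq> 0" "B v u \<noteq> 0" "B w v \<noteq> 0" "B (z - u) v \<noteq> 0" "B (z - v) u \<noteq> 0"
    using uv by (simp_all add: w_def linear_simps skew[of u v])
  then have in_S: "u \<in> S" "v \<in> S" "w \<in> S" "z - u \<in> S" "z - v \<in> S"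
    using S H1_iff by blast+
  have "CE_d B \<eta> [u, v, w] = omega B z [u, v, w]"
    using d\<eta> in_S by simp
  moreover have "omega B z [u, v, w] = of_int (B u v)"
    by (simp add: omega_def w_def algebra_simps)
  moreover have "B u w = - B u v" "B v w = B u v"
    by (simp_all add: w_def linear_simps skew[of u v])
  moreover have "u + w = z - v" "v + w = z - u"
    by (simp_all add: w_def algebra_simps)
  moreover have "\<eta> [z - v, v] = - \<eta> [v, z - v]" "\<eta> [z - u, u] = - \<eta> [u, z - u]"
    using graded_cochain_2_swap[OF \<eta>] in_S by blast+
  ultimately have "of_int (B u v) * (\<eta> [u, z - u] + \<eta> [v, z - v] - 1 - \<eta> [u + v, w]) = 0"
    unfolding CE_d_triple by (simp add: algebra_simps)
  moreover have "z - (u + v) = w"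
    by (simp add: w_def)
  ultimately show ?thesis
    using uv by simp
qed

lemma omega_not_coboundary_if_torsion:
  assumes "torsion_elem z" "B \<noteq> (\<lambda>x y. 0)" "H1 B \<subseteq> S"
  shows "\<not> is_coboundary B S 3 z (omega B z)"
proof
  assume "is_coboundary B S 3 z (omega B z)"
  then obtain \<eta> where \<eta>: "graded_cochain S 2 z \<eta>"
    and d\<eta>: "\<forall>us. length us = 3 \<and> set us \<subseteq> S \<longrightarrow> CE_d B \<eta> us = omega B z us"
    unfolding is_coboundary_def by force
  define f where "f x = \<eta> [x, z - x]" for x
  note f_add = omega_coboundary_functional_equation[OF \<eta> d\<eta> \<open>H1 B \<subseteq> S\<close>, folded f_def]
  have f_shift: "f (x + z) = f x - 2" if xy: "B x y \<noteq> 0" for x y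
  proof -
    have "B (x + y) (z - y) \<noteq> 0" "B y x \<noteq> 0" "B (z - y) x \<noteq> 0"
      using xy by (simp_all add: linear_simps skew[of x y])
    then have "y \<in> S" "z - y \<in> S"
      using \<open>H1 B \<subseteq> S\<close> H1_iff by blast+
    then have "f (z - y) = - f y"
      unfolding f_def using graded_cochain_2_swap[OF \<eta>, of y "z - y"] by simp
    moreover have "f ((x + y) + (z - y)) = f (x + y) + f (z - y) - 1"
      using f_add[OF \<open>B (x + y) (z - y) \<noteq> 0\<close>] .
    ultimately show ?thesis
      using f_add[OF xy] by (simp add: algebra_simps)
  qed
  obtain x y where xy: "B x y \<noteq> 0"
    using \<open>B \<noteq> (\<lambda>x y. 0)\<close> by blast
  have f_iter: "f (x + (\<Sum>i<n. z)) = f x - 2 * of_nat n" for n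
  proof (induction n)
    case (Suc n)
    have "B (x + (\<Sum>i<n. z)) y \<noteq> 0"
      using xy by (simp add: add_left sum_left)
    from f_shift[OF this] Suc show ?case
      by (simp add: add.assoc algebra_simps)
  qed simp
  obtain n :: nat where "n > 0" "(\<Sum>i<n. z) = 0"
    using \<open>torsion_elem z\<close> unfolding torsion_elem_def by blast
  with f_iter[of n] show False
    by simp
qed

lemma omega_coboundary_if_not_torsion:
  assumes "\<not> torsion_elem z"
  shows "is_coboundary B S 3 z (omega B z)"
proof -
  obtain \<phi> :: "'a \<Rightarrow> rat" where \<phi>_add: "\<And>x y. \<phi> (x + y) = \<phi> x + \<phi> y" and "\<phi> z = 1"
    using not_torsion_elem_ex_hom[OF assms] by blast
  have \<phi>_diff: "\<phi> (x - y) = \<phi> x - \<phi> y" for x y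
    using \<phi>_add[of "x - y" y] by simp
  define \<eta> where "\<eta> us = (if sum_list us = z then 1 - 2 * \<phi> (us ! 0) else 0)" for us
  have "graded_cochain UNIV 2 z \<eta>"
    unfolding graded_cochain_def cochain_on_def
  proof (intro conjI allI impI)
    fix us :: "'a list" and i j :: nat
    assume "length us = 2 \<and> set us \<subseteq> UNIV" "i < j \<and> j < 2"
    then obtain a b where us: "us = [a, b]"
      using length_2_cases by blast
    from \<open>i < j \<and> j < 2\<close> have "i = 0" "j = 1"
      by auto
    show "\<eta> (list_swap us i j) = - \<eta> us"
    proof (cases "a + b = z")
      case True
      then have "b = z - a"
        by (simp add: algebra_simps)
      then show ?thesis
        using \<open>\<phi> z = 1\<close> by (simp add: us \<open>i = 0\<close> \<open>j = 1\<close> list_swap_def \<eta>_def \<phi>_diff)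
    qed (simp add: us \<open>i = 0\<close> \<open>j = 1\<close> list_swap_def \<eta>_def add.commute)
  qed (simp add: \<eta>_def)
  then have \<eta>_graded: "graded_cochain S (3 - 1) z \<eta>"
    using graded_cochain_subset[of UNIV 2 z \<eta> S] by simp
  have d\<eta>: "CE_d B \<eta> us = omega B z us" if "length us = 3" for us
  proof -
    obtain a b c where us: "us = [a, b, c]"
      using length_3_cases \<open>length us = 3\<close> by blast
    show ?thesis
    proof (cases "a + b + c = z")
      case True
      then have c: "c = z - a - b"
        by (simp add: algebra_simps)
      show ?thesis
        by (simp add: us c CE_d_triple \<eta>_def omega_def linear_simps skew[of a b] \<phi>_add \<phi>_diff
            \<open>\<phi> z = 1\<close> algebra_simps)
    qed (simp add: us CE_d_triple \<eta>_def omega_def algebra_simps)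
  qed
  show ?thesis
    unfolding is_coboundary_def using \<eta>_graded d\<eta> by blast
qed

end

theorem theorem5p4:
  fixes B :: "'a::ab_group_add \<Rightarrow> 'a \<Rightarrow> int" and z :: 'a
  assumes "bilinear_form B" and "alternating_form B" and "B \<noteq> (\<lambda>x y. 0)"
    and "z \<in> ker_mu B"
  shows "graded_cochain UNIV 3 z (omega B z) \<and> is_cocycle B UNIV 3 (omega B z)
    \<and> graded_cochain (H1 B) 3 z (omega B z) \<and> is_cocycle B (H1 B) 3 (omega B z)
    \<and> (torsion_elem z \<longrightarrow> \<not> is_coboundary B UNIV 3 z (omega B z))
    \<and> (\<not> torsion_elem z \<longrightarrow> is_coboundary B (H1 B) 3 z (omega B z))"
proof -
  interpret alternating_bilinear_ker B z
    using assms(1,2,4) by unfold_locales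
  show ?thesis
  proof (intro conjI impI)
    show "graded_cochain UNIV 3 z (omega B z)" "is_cocycle B UNIV 3 (omega B z)"
      by (fact omega_graded_cochain omega_cocycle)+
    show "graded_cochain (H1 B) 3 z (omega B z)"
      using omega_graded_cochain by (rule graded_cochain_subset) simp
    show "is_cocycle B (H1 B) 3 (omega B z)"
      using omega_cocycle by (rule is_cocycle_subset) simp
    show "\<not> is_coboundary B UNIV 3 z (omega B z)" if "torsion_elem z"
      using omega_not_coboundary_if_torsion[OF that assms(3)] by simp
    show "is_coboundary B (H1 B) 3 z (omega B z)" if "\<not> torsion_elem z"
      using omega_coboundary_if_not_torsion[OF that] .
  qed
qed

end
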